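(* Let $w\in W$ and $\alpha\in\Phi^+\cap w\Phi^-$. Then $\ell(\sigma_\alpha w)=\ell(w)-1$ if and only if there do not exist $\beta,\delta\in\Phi^+\cap w\Phi^-$ with $\alpha=\beta+\delta$. Similarly, for $\alpha\in\Phi^+\cap w\Phi^+$, $\ell(\sigma_\alpha w)=\ell(w)+1$ if and only if there do not exist $\beta,\delta\in\Phi^+\cap w\Phi^+$ with $\alpha=\beta+\delta$.
   Context: $\Phi$ is a simply laced (reduced, irreducible ADE) root system with positive roots $\Phi^+$, $\Phi^-=-\Phi^+$, Weyl group $W$, length function $\ell$, and $\sigma_\alpha$ the reflection in $\alpha$. *)

theory Defs
  imports "HOL-Analysis.Analysis"
begin

definition refl :: "'a::real_inner \<Rightarrow> 'a \<Rightarrow> 'a" where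
  "refl a x = x - ((2 * (x \<bullet> a)) / (a \<bullet> a)) *\<^sub>R a"

definition root_system :: "'a::euclidean_space set \<Rightarrow> bool" where
  "root_system R \<longleftrightarrow> finite R \<and> 0 \<notin> R \<and> span R = UNIV
     \<and> (\<forall>a\<in>R. refl a ` R = R)
     \<and> (\<forall>a\<in>R. \<forall>b\<in>R. (2 * (b \<bullet> a)) / (a \<bullet> a) \<in> \<int>)"

definition reduced :: "'a::euclidean_space set \<Rightarrow> bool" where
  "reduced R \<longleftrightarrow> (\<forall>a\<in>R. \<forall>c::real. c *\<^sub>R a \<in> R \<longrightarrow> c = 1 \<or> c = -1)"

definition irreducible_rs :: "'a::euclidean_space set \<Rightarrow> bool" where
  "irreducible_rs R \<longleftrightarrow> R \<noteq> {} \<and> \<not> (\<exists>A B. A \<noteq> {} \<and> B \<noteq> {} \<and> A \<union> B = R \<and> A \<inter> B = {}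
       \<and> (\<forall>a\<in>A. \<forall>b\<in>B. a \<bullet> b = 0))"

definition simply_laced_root_system :: "'a::euclidean_space set \<Rightarrow> bool" where
  "simply_laced_root_system R \<longleftrightarrow> root_system R \<and> reduced R \<and> irreducible_rs R
     \<and> (\<forall>a\<in>R. \<forall>b\<in>R. a \<bullet> a = b \<bullet> b)"

definition positive_system :: "'a::euclidean_space set \<Rightarrow> 'a set \<Rightarrow> bool" where
  "positive_system R P \<longleftrightarrow> (\<exists>v. (\<forall>a\<in>R. v \<bullet> a \<noteq> 0) \<and> P = {a\<in>R. v \<bullet> a > 0})"

definition simple_system :: "'a::euclidean_space set \<Rightarrow> 'a set \<Rightarrow> bool" where
  "simple_system P D \<longleftrightarrow> D \<subseteq> P \<and> independent D \<and>
     (\<forall>a\<in>P. \<exists>c. (\<forall>d\<in>D. c d \<ge> 0) \<and> a = (\<Sum>d\<in>D. c d *\<^sub>R d))"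

inductive_set weyl_group :: "'a::euclidean_space set \<Rightarrow> ('a \<Rightarrow> 'a) set" for R where
  weyl_id: "id \<in> weyl_group R"
| weyl_step: "a \<in> R \<Longrightarrow> w \<in> weyl_group R \<Longrightarrow> refl a \<circ> w \<in> weyl_group R"

definition weyl_length :: "'a::euclidean_space set \<Rightarrow> ('a \<Rightarrow> 'a) \<Rightarrow> nat" where
  "weyl_length D w = (LEAST n. \<exists>ds. length ds = n \<and> set ds \<subseteq> D \<and>
      w = foldr (\<lambda>d f. refl d \<circ> f) ds id)"

end

theory Submission
  imports Defs
begin

text \<open>
  The length is the number of inversions, \<open>l(w) = |\<Phi>\<^sup>+ \<inter> w\<Phi>\<^sup>-|\<close>, by the exchange property
  for words in simple reflections. For \<open>\<alpha> \<in> \<Phi>\<^sup>+\<close>, the reflection \<open>\<sigma>\<^sub>\<alpha>\<close> permutes \<open>\<Phi>\<^sup>+\<close> up to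
  sign, the sign changing exactly on \<open>C\<^sub>\<alpha> = {\<gamma> \<in> \<Phi>\<^sup>+. \<sigma>\<^sub>\<alpha> \<gamma> \<in> \<Phi>\<^sup>-}\<close>; hence
  \<open>l(\<sigma>\<^sub>\<alpha> w) - l(w) = \<Sum>\<gamma>\<in>C\<^sub>\<alpha>. 1 - 2[\<gamma> \<in> w\<Phi>\<^sup>-]\<close>. When all roots have the same length,
  the pairing \<open>2(\<gamma>,\<alpha>)/(\<alpha>,\<alpha>)\<close> of non-proportional roots lies in \<open>{-1, 0, 1}\<close>, so
  \<open>C\<^sub>\<alpha> = {\<alpha>} \<union> {\<gamma> \<in> \<Phi>\<^sup>+. \<alpha> - \<gamma> \<in> \<Phi>\<^sup>+}\<close> and the second part is paired by \<open>\<gamma> \<mapsto> \<alpha> - \<gamma>\<close>.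
  If \<open>\<alpha> \<in> w\<Phi>\<^sup>-\<close>, each pair contributes \<open>\<le> 0\<close> to the length because \<open>w\<Phi>\<^sup>+\<close> is closed under
  addition inside \<open>\<Phi>\<close>, and it contributes \<open>< 0\<close> exactly when \<open>\<alpha> = \<gamma> + (\<alpha> - \<gamma>)\<close> splits inside
  \<open>\<Phi>\<^sup>+ \<inter> w\<Phi>\<^sup>-\<close>. The case \<open>\<alpha> \<in> w\<Phi>\<^sup>+\<close> is the first one applied to \<open>\<sigma>\<^sub>\<alpha> w\<close>.
\<close>

lemma refl_add: "refl a (x + y) = refl a x + refl a y"
  by (simp add: refl_def inner_add_left add_divide_distrib algebra_simps)

lemma refl_scaleR: "refl a (c *\<^sub>R x) = c *\<^sub>R refl a x"
  by (simp add: refl_def algebra_simps)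

lemma refl_uminus [simp]: "refl a (- x) = - refl a x"
  by (simp add: refl_def)

lemma linear_refl: "linear (refl a)"
  by (rule linearI) (simp_all add: refl_add refl_scaleR)

lemma refl_self: "a \<noteq> 0 \<Longrightarrow> refl a a = - a"
  by (simp add: refl_def scaleR_2)

lemma refl_refl [simp]: "a \<noteq> 0 \<Longrightarrow> refl a (refl a x) = x"
  by (simp add: refl_def inner_diff_left algebra_simps)

lemma inj_refl: "a \<noteq> 0 \<Longrightarrow> inj (refl a)"
  by (metis injI refl_refl)

lemma inner_refl_refl: "a \<noteq> 0 \<Longrightarrow> refl a x \<bullet> refl a y = x \<bullet> y"
  by (simp add: refl_def inner_diff_left inner_diff_right algebra_simps power2_eq_square inner_commute)

lemma refl_of_uminus: "refl (- a) = refl a"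
  by (rule ext) (simp add: refl_def)

lemma refl_refl_conj:
  assumes "d \<noteq> 0"
  shows "refl (refl d b) = refl d \<circ> refl b \<circ> refl d"
proof
  fix x
  have "refl d (refl d x - (2 * (refl d x \<bullet> b) / (b \<bullet> b)) *\<^sub>R b)
      = x - (2 * (refl d x \<bullet> b) / (b \<bullet> b)) *\<^sub>R refl d b"
    using assms by (simp add: linear_diff[OF linear_refl] refl_scaleR)
  moreover have "refl d x \<bullet> b = x \<bullet> refl d b" and "b \<bullet> b = refl d b \<bullet> refl d b"
    using inner_refl_refl[OF assms, of "refl d x" b] inner_refl_refl[OF assms, of b b] assms by simp_all
  ultimately show "refl (refl d b) x = (refl d \<circ> refl b \<circ> refl d) x"
    by (simp add: refl_def[of b] refl_def[of "refl d b"])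
qed

lemma refl_comp_image_iff: "a \<noteq> 0 \<Longrightarrow> x \<in> (refl a \<circ> w) ` S \<longleftrightarrow> refl a x \<in> w ` S"
  by (auto simp: image_iff) (metis refl_refl)

definition refl_word :: "'a::real_inner list \<Rightarrow> 'a \<Rightarrow> 'a" where
  "refl_word ds = foldr (\<lambda>d f. refl d \<circ> f) ds id"

lemma refl_word_Nil [simp]: "refl_word [] = id"
  by (simp add: refl_word_def)

lemma refl_word_Cons [simp]: "refl_word (d # ds) = refl d \<circ> refl_word ds"
  by (simp add: refl_word_def)

lemma refl_word_append: "refl_word (xs @ ys) = refl_word xs \<circ> refl_word ys"
  by (induction xs) (simp_all add: o_assoc)

lemma ex_decomposition_iff_diff:
  fixes I S :: "'a::ab_group_add set"
  shows "I \<subseteq> S \<Longrightarrow>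
    (\<exists>g\<in>{g\<in>S. a - g \<in> S}. g \<in> I \<and> a - g \<in> I) \<longleftrightarrow> (\<exists>b\<in>I. \<exists>d\<in>I. a = b + d)"
  by (metis (no_types, lifting) add_diff_cancel_left' diff_add_cancel mem_Collect_eq subsetD)

locale positive_root_system =
  fixes R P D :: "'a::euclidean_space set" and v :: 'a
  assumes root_system: "root_system R" and reduced: "reduced R"
    and regular: "\<forall>a\<in>R. v \<bullet> a \<noteq> 0" and P_def: "P = {a\<in>R. v \<bullet> a > 0}"
    and simple: "simple_system P D"
begin

lemma finite_roots: "finite R"
  and zero_not_root: "0 \<notin> R"
  and refl_image_roots: "a \<in> R \<Longrightarrow> refl a ` R = R"
  and root_pairing_int: "a \<in> R \<Longrightarrow> b \<in> R \<Longrightarrow> 2 * (b \<bullet> a) / (a \<bullet> a) \<in> \<int>"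
  using root_system unfolding root_system_def by blast+

lemma root_nonzero: "a \<in> R \<Longrightarrow> a \<noteq> 0"
  using zero_not_root by auto

lemma refl_root: "a \<in> R \<Longrightarrow> b \<in> R \<Longrightarrow> refl a b \<in> R"
  using refl_image_roots by blast

lemma uminus_root: "a \<in> R \<Longrightarrow> - a \<in> R"
  using refl_root[of a a] refl_self[OF root_nonzero] by simp

lemma pos_roots_subset: "P \<subseteq> R"
  by (simp add: P_def)

lemma pos_root: "a \<in> P \<Longrightarrow> a \<in> R"
  using pos_roots_subset by blast

lemma finite_pos_roots: "finite P"
  using finite_roots pos_roots_subset finite_subset by blast

lemma pos_root_nonzero: "a \<in> P \<Longrightarrow> a \<noteq> 0"
  by (simp add: pos_root root_nonzero)

lemma pos_root_inner: "a \<in> P \<Longrightarrow> v \<bullet> a > 0"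
  by (simp add: P_def)

lemma uminus_pos_root: "a \<in> P \<Longrightarrow> - a \<notin> P"
  by (simp add: P_def)

lemma root_cases: "a \<in> R \<Longrightarrow> a \<in> P \<or> - a \<in> P"
  using regular uminus_root[of a] by (cases "v \<bullet> a > 0") (auto simp: P_def)

lemma pos_root_add: "a \<in> P \<Longrightarrow> b \<in> P \<Longrightarrow> a + b \<in> R \<Longrightarrow> a + b \<in> P"
  by (simp add: P_def inner_add_right)

lemma roots_eq_pos_Un_neg: "R = P \<union> uminus ` P"
proof
  show "R \<subseteq> P \<union> uminus ` P"
    using root_cases by (metis UnCI image_eqI minus_minus subsetI)
  show "P \<union> uminus ` P \<subseteq> R"
    using pos_roots_subset uminus_root by blast
qed

lemma pos_Int_neg_empty: "P \<inter> uminus ` P = {}"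
  using uminus_pos_root by blast

lemma simple_subset: "D \<subseteq> P"
  and independent_simple: "independent D"
  and pos_root_simple_combination:
    "a \<in> P \<Longrightarrow> \<exists>c. (\<forall>d\<in>D. c d \<ge> 0) \<and> a = (\<Sum>d\<in>D. c d *\<^sub>R d)"
  using simple unfolding simple_system_def by blast+

lemma finite_simple: "finite D"
  using independent_simple by (rule finiteI_independent)

lemma simple_root: "d \<in> D \<Longrightarrow> d \<in> P"
  using simple_subset by blast

lemma simple_combination_zero:
  "(\<Sum>e\<in>D. u e *\<^sub>R e) = 0 \<Longrightarrow> d \<in> D \<Longrightarrow> u d = 0"
  using independent_simple finite_simple dependent_finite by blast

lemma simple_refl_permutes:
  assumes d: "d \<in> D" and g: "g \<in> P" and gd: "g \<noteq> d"
  shows "refl d g \<in> P"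
proof (rule ccontr)
  assume "refl d g \<notin> P"
  then have "- refl d g \<in> P"
    using root_cases refl_root pos_root simple_root d g by blast
  then obtain c' where c': "\<forall>e\<in>D. c' e \<ge> 0" "- refl d g = (\<Sum>e\<in>D. c' e *\<^sub>R e)"
    using pos_root_simple_combination by blast
  obtain c where c: "\<forall>e\<in>D. c e \<ge> 0" "g = (\<Sum>e\<in>D. c e *\<^sub>R e)"
    using pos_root_simple_combination g by blast
  define k where "k = 2 * (g \<bullet> d) / (d \<bullet> d)"
  have "(\<Sum>e\<in>D. (c e + c' e) *\<^sub>R e) = g - refl d g"
    unfolding scaleR_add_left sum.distrib c(2)[symmetric] c'(2)[symmetric] by simp
  also have "\<dots> = k *\<^sub>R d"
    by (simp add: refl_def k_def)
  also have "\<dots> = (\<Sum>e\<in>D. (if e = d then k else 0) *\<^sub>R e)"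
    using d finite_simple by (simp add: if_distrib[of "\<lambda>x. x *\<^sub>R _"] sum.delta cong: if_cong)
  finally have "(\<Sum>e\<in>D. (c e + c' e - (if e = d then k else 0)) *\<^sub>R e) = 0"
    by (simp only: scaleR_diff_left sum_subtractf) simp
  then have "c e + c' e = 0" if "e \<in> D" "e \<noteq> d" for e
    using simple_combination_zero that by fastforce
  \<comment> \<open>both coefficient vectors are nonnegative, so g is supported on d alone\<close>
  then have "c e = 0" if "e \<in> D" "e \<noteq> d" for e
    using that c(1) c'(1) by (metis add_nonneg_eq_0_iff)
  then have "g = c d *\<^sub>R d"
    using c(2) d finite_simple by (simp add: sum.remove[of D d] sum.neutral)
  then have "c d = 1 \<or> c d = -1"
    using reduced d g pos_root simple_root unfolding reduced_def by blast
  then show False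
    using \<open>g = c d *\<^sub>R d\<close> gd g d simple_root uminus_pos_root by auto
qed

lemma weyl_group_linear_inj_roots:
  "w \<in> weyl_group R \<Longrightarrow> linear w \<and> inj w \<and> w ` R = R"
proof (induction rule: weyl_group.induct)
  case weyl_id
  then show ?case by (simp add: linear_iff)
next
  case (weyl_step a w)
  then have "linear (refl a \<circ> w)" "inj (refl a \<circ> w)"
    using linear_compose[OF _ linear_refl] inj_compose[OF inj_refl[OF root_nonzero]] by blast+
  moreover have "(refl a \<circ> w) ` R = R"
    using weyl_step refl_image_roots by (simp only: image_comp[symmetric])
  ultimately show ?case by blast
qed

lemma weyl_group_neg_image_iff:
  assumes "w \<in> weyl_group R" "x \<in> R"
  shows "x \<in> w ` uminus ` P \<longleftrightarrow> x \<notin> w ` P"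
proof -
  have "inj w" "w ` R = R"
    using weyl_group_linear_inj_roots[OF assms(1)] by auto
  then have "w ` P \<union> w ` uminus ` P = R" and "w ` P \<inter> w ` uminus ` P = {}"
    using roots_eq_pos_Un_neg pos_Int_neg_empty by (metis image_Un, metis image_Int image_empty)
  then show ?thesis
    using assms(2) by blast
qed

lemma weyl_group_uminus_neg_image_iff:
  assumes "w \<in> weyl_group R"
  shows "- x \<in> w ` uminus ` P \<longleftrightarrow> x \<in> w ` P"
proof -
  have "w ` uminus ` P = uminus ` w ` P"
    using weyl_group_linear_inj_roots[OF assms] by (simp add: image_comp comp_def linear_neg)
  then show ?thesis
    by (simp add: image_iff)
qed

lemma weyl_group_pos_image_add:
  assumes w: "w \<in> weyl_group R" and "x \<in> w ` P" "y \<in> w ` P" "x + y \<in> R"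
  shows "x + y \<in> w ` P"
proof -
  have "linear w" "inj w" "w ` R = R"
    using weyl_group_linear_inj_roots[OF w] by auto
  obtain p q where pq: "p \<in> P" "q \<in> P" "x = w p" "y = w q"
    using assms(2,3) by blast
  obtain r where r: "r \<in> R" "x + y = w r"
    using assms(4) \<open>w ` R = R\<close> by blast
  have "w r = w (p + q)"
    using pq r \<open>linear w\<close> by (simp add: linear_add)
  then have "r = p + q"
    using \<open>inj w\<close> by (simp add: inj_eq)
  then show ?thesis
    using pos_root_add pq r by blast
qed

lemma pos_root_inner_simple_pos:
  assumes a: "a \<in> P"
  shows "\<exists>d\<in>D. a \<bullet> d > 0"
proof (rule ccontr)
  assume "\<not> ?thesis"
  then have le: "\<forall>d\<in>D. a \<bullet> d \<le> 0" by auto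
  obtain c where c: "\<forall>d\<in>D. c d \<ge> 0" "a = (\<Sum>d\<in>D. c d *\<^sub>R d)"
    using pos_root_simple_combination a by blast
  have "a \<bullet> a = (\<Sum>d\<in>D. c d * (a \<bullet> d))"
    by (subst (2) c(2)) (simp add: inner_sum_right)
  also have "\<dots> \<le> 0"
    using c(1) le by (intro sum_nonpos) (simp add: mult_nonneg_nonpos)
  finally show False
    using pos_root_nonzero[OF a] inner_gt_zero_iff not_le by metis
qed

lemma refl_pos_root_simple_word:
  "a \<in> P \<Longrightarrow> \<exists>ds. set ds \<subseteq> D \<and> refl a = refl_word ds"
proof (induction a rule: measure_induct_rule[where f="\<lambda>a. card {b\<in>P. v \<bullet> b < v \<bullet> a}"])
  case (less a)
  show ?case
  proof (cases "a \<in> D")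
    case True
    then show ?thesis by (intro exI[of _ "[a]"]) auto
  next
    case False
    obtain d where d: "d \<in> D" "a \<bullet> d > 0"
      using pos_root_inner_simple_pos less.prems by blast
    define b where "b = refl d a"
    have b: "b \<in> P"
      unfolding b_def using simple_refl_permutes d(1) less.prems False by blast
    \<comment> \<open>reflecting in d strictly lowers the height of a, so induction on the height applies\<close>
    have "v \<bullet> b = v \<bullet> a - (2 * (a \<bullet> d) / (d \<bullet> d)) * (v \<bullet> d)"
      by (simp add: b_def refl_def inner_diff_right)
    moreover have "(2 * (a \<bullet> d) / (d \<bullet> d)) * (v \<bullet> d) > 0"
      using d pos_root_nonzero pos_root_inner simple_root by (intro mult_pos_pos) auto
    ultimately have "v \<bullet> b < v \<bullet> a" by linarith
    then have "{x\<in>P. v \<bullet> x < v \<bullet> b} \<subset> {x\<in>P. v \<bullet> x < v \<bullet> a}"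
      using b by auto
    then have "card {x\<in>P. v \<bullet> x < v \<bullet> b} < card {x\<in>P. v \<bullet> x < v \<bullet> a}"
      using finite_pos_roots by (intro psubset_card_mono) auto
    then obtain ds where ds: "set ds \<subseteq> D" "refl b = refl_word ds"
      using less.IH b by blast
    have "refl a = refl (refl d b)"
      using d(1) simple_root pos_root_nonzero by (simp add: b_def)
    also have "\<dots> = refl_word ([d] @ ds @ [d])"
      using d(1) simple_root pos_root_nonzero by (simp add: refl_refl_conj ds(2) refl_word_append o_assoc)
    finally show ?thesis
      using ds d by (intro exI[of _ "[d] @ ds @ [d]"]) auto
  qed
qed

lemma weyl_group_simple_word:
  "w \<in> weyl_group R \<Longrightarrow> \<exists>ds. set ds \<subseteq> D \<and> w = refl_word ds"
proof (induction rule: weyl_group.induct)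
  case weyl_id
  then show ?case by (intro exI[of _ "[]"]) simp
next
  case (weyl_step a w)
  obtain es where "set es \<subseteq> D" "refl a = refl_word es"
    using refl_pos_root_simple_word root_cases[OF weyl_step.hyps(1)] refl_of_uminus by metis
  with weyl_step.IH obtain ds where "set ds \<subseteq> D" "w = refl_word ds" "set es \<subseteq> D" "refl a = refl_word es"
    by blast
  then show ?case by (intro exI[of _ "es @ ds"]) (simp add: refl_word_append)
qed

lemma refl_word_weyl_group: "set ds \<subseteq> D \<Longrightarrow> refl_word ds \<in> weyl_group R"
  by (induction ds) (auto intro: weyl_group.intros pos_root simple_root)

lemma refl_word_exchange:
  "set es \<subseteq> D \<Longrightarrow> d \<in> P \<Longrightarrow> d \<in> refl_word es ` uminus ` P \<Longrightarrow>
   \<exists>i<length es. refl d \<circ> refl_word es = refl_word (take i es @ drop (Suc i) es)"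
proof (induction es arbitrary: d)
  case Nil
  then show ?case using uminus_pos_root by auto
next
  case (Cons e es)
  have e0: "e \<noteq> 0" using Cons.prems simple_root pos_root_nonzero by auto
  show ?case
  proof (cases "d = e")
    case True
    then have "refl d \<circ> refl_word (e # es) = refl_word (take 0 (e # es) @ drop (Suc 0) (e # es))"
      using e0 by (auto simp: fun_eq_iff)
    then show ?thesis by blast
  next
    case False
    define b where "b = refl e d"
    have "b \<in> P" "b \<in> refl_word es ` uminus ` P"
      using Cons.prems False simple_refl_permutes refl_comp_image_iff[OF e0]
      by (auto simp: b_def e0)
    moreover have "set es \<subseteq> D"
      using Cons.prems(1) by simp
    ultimately obtain i where i: "i < length es" "refl b \<circ> refl_word es = refl_word (take i es @ drop (Suc i) es)"
      using Cons.IH by blast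
    have "refl d \<circ> refl_word (e # es) = refl e \<circ> (refl b \<circ> refl_word es)"
      using e0 by (simp add: b_def refl_refl_conj fun_eq_iff)
    also have "\<dots> = refl_word (take (Suc i) (e # es) @ drop (Suc (Suc i)) (e # es))"
      by (simp add: i(2))
    finally show ?thesis
      using i(1) by (metis Suc_less_eq length_Cons)
  qed
qed

definition inversions :: "('a \<Rightarrow> 'a) \<Rightarrow> 'a set" where
  "inversions w = P \<inter> w ` uminus ` P"

definition neg_indicator :: "('a \<Rightarrow> 'a) \<Rightarrow> 'a \<Rightarrow> int" where
  "neg_indicator w x = of_bool (x \<in> w ` uminus ` P)"

lemma card_inversions_sum: "int (card (inversions w)) = (\<Sum>g\<in>P. neg_indicator w g)"
  using finite_pos_roots by (simp add: inversions_def neg_indicator_def Int_def)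

lemma neg_indicator_uminus:
  "w \<in> weyl_group R \<Longrightarrow> x \<in> R \<Longrightarrow> neg_indicator w (- x) = 1 - neg_indicator w x"
  by (simp add: neg_indicator_def weyl_group_uminus_neg_image_iff weyl_group_neg_image_iff)

lemma neg_indicator_nonneg: "neg_indicator w x \<ge> 0"
  by (simp add: neg_indicator_def)

definition pos_refl :: "'a \<Rightarrow> 'a \<Rightarrow> 'a" where
  "pos_refl a g = (if refl a g \<in> P then refl a g else - refl a g)"

lemma pos_refl_pos: "a \<in> P \<Longrightarrow> g \<in> P \<Longrightarrow> pos_refl a g \<in> P"
  using root_cases[OF refl_root] pos_root by (auto simp: pos_refl_def)

lemma pos_refl_pos_refl: "a \<in> P \<Longrightarrow> g \<in> P \<Longrightarrow> pos_refl a (pos_refl a g) = g"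
  using pos_root_nonzero[of a] uminus_pos_root by (auto simp: pos_refl_def)

lemma bij_pos_refl: "a \<in> P \<Longrightarrow> bij_betw (pos_refl a) P P"
  by (rule bij_betwI[where g = "pos_refl a"]) (auto simp: pos_refl_pos pos_refl_pos_refl)

lemma bij_pos_refl_negated:
  assumes "a \<in> P"
  shows "bij_betw (pos_refl a) {g\<in>P. refl a g \<notin> P} {g\<in>P. refl a g \<notin> P}"
proof -
  have "refl a (pos_refl a g) \<notin> P" if "g \<in> P" "refl a g \<notin> P" for g
    using that pos_root_nonzero[OF assms] uminus_pos_root by (simp add: pos_refl_def)
  then show ?thesis
    using assms by (intro bij_betwI[where g = "pos_refl a"]) (auto simp: pos_refl_pos pos_refl_pos_refl)
qed

lemma card_inversions_refl_comp:
  assumes w: "w \<in> weyl_group R" and a: "a \<in> P"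
  shows "int (card (inversions (refl a \<circ> w)))
    = int (card (inversions w)) + (\<Sum>g\<in>{g\<in>P. refl a g \<notin> P}. 1 - 2 * neg_indicator w g)"
proof -
  let ?C = "{g\<in>P. refl a g \<notin> P}"
  have a0: "a \<noteq> 0"
    using a by (rule pos_root_nonzero)
  \<comment> \<open>\<open>refl a g = \<plusminus>pos_refl a g\<close>, with the minus sign exactly on \<open>?C\<close>\<close>
  have split: "neg_indicator w (refl a g)
      = neg_indicator w (pos_refl a g) + (if g \<in> ?C then 1 - 2 * neg_indicator w (pos_refl a g) else 0)"
    if g: "g \<in> P" for g
  proof (cases "refl a g \<in> P")
    case False
    then have "refl a g = - pos_refl a g"
      by (simp add: pos_refl_def)
    then show ?thesis
      using False g neg_indicator_uminus[OF w pos_root[OF pos_refl_pos[OF a g]]] by simp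
  qed (simp add: pos_refl_def)
  have "int (card (inversions (refl a \<circ> w))) = (\<Sum>g\<in>P. neg_indicator w (refl a g))"
    unfolding card_inversions_sum neg_indicator_def refl_comp_image_iff[OF a0] ..
  also have "\<dots> = (\<Sum>g\<in>P. neg_indicator w (pos_refl a g))
      + (\<Sum>g\<in>?C. 1 - 2 * neg_indicator w (pos_refl a g))"
    using finite_pos_roots by (simp add: split sum.distrib sum.inter_filter)
  also have "\<dots> = (\<Sum>g\<in>P. neg_indicator w g) + (\<Sum>g\<in>?C. 1 - 2 * neg_indicator w g)"
    using sum.reindex_bij_betw[OF bij_pos_refl[OF a]]
      sum.reindex_bij_betw[OF bij_pos_refl_negated[OF a], of "\<lambda>g. 1 - 2 * neg_indicator w g"]
    by simp
  finally show ?thesis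
    by (simp add: card_inversions_sum)
qed

lemma card_inversions_simple_refl_comp:
  assumes w: "w \<in> weyl_group R" and d: "d \<in> D"
  shows "int (card (inversions (refl d \<circ> w))) = int (card (inversions w)) + 1 - 2 * neg_indicator w d"
proof -
  have "{g\<in>P. refl d g \<notin> P} = {d}"
    using simple_refl_permutes[OF d] simple_root[OF d] uminus_pos_root
      refl_self[OF pos_root_nonzero[OF simple_root[OF d]]] by auto
  then show ?thesis
    using card_inversions_refl_comp[OF w simple_root[OF d]] by simp
qed

lemma card_inversions_refl_word_le:
  "set ds \<subseteq> D \<Longrightarrow> card (inversions (refl_word ds)) \<le> length ds"
proof (induction ds)
  case Nil
  then show ?case
    using pos_Int_neg_empty by (simp add: inversions_def)
next
  case (Cons d ds)
  then have "int (card (inversions (refl_word (d # ds))))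
      = int (card (inversions (refl_word ds))) + 1 - 2 * neg_indicator (refl_word ds) d"
    using card_inversions_simple_refl_comp[OF refl_word_weyl_group] by simp
  then show ?case
    using Cons neg_indicator_nonneg[of "refl_word ds" d] by (simp del: refl_word_Cons)
qed

lemma shorter_word_if_card_inversions_less:
  "set ds \<subseteq> D \<Longrightarrow> card (inversions (refl_word ds)) < length ds \<Longrightarrow>
   \<exists>ds'. set ds' \<subseteq> D \<and> refl_word ds' = refl_word ds \<and> length ds' < length ds"
proof (induction ds)
  case Nil
  then show ?case by simp
next
  case (Cons d ds)
  show ?case
  proof (cases "card (inversions (refl_word ds)) < length ds")
    case True
    then obtain ds' where "set ds' \<subseteq> D" "refl_word ds' = refl_word ds" "length ds' < length ds"
      using Cons by auto
    then show ?thesis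
      using Cons.prems by (intro exI[of _ "d # ds'"]) auto
  next
    case False
    \<comment> \<open>\<open>ds\<close> is reduced, so prepending \<open>d\<close> lowered the count: \<open>d\<close> is an inversion and can be exchanged\<close>
    then have "card (inversions (refl_word ds)) = length ds"
      using Cons.prems card_inversions_refl_word_le[of ds] by simp
    moreover have "int (card (inversions (refl_word (d # ds))))
        = int (card (inversions (refl_word ds))) + 1 - 2 * neg_indicator (refl_word ds) d"
      using Cons.prems card_inversions_simple_refl_comp[OF refl_word_weyl_group] by simp
    ultimately have "neg_indicator (refl_word ds) d \<noteq> 0"
      using Cons.prems(2) by (simp del: refl_word_Cons)
    then have "d \<in> refl_word ds ` uminus ` P"
      by (simp add: neg_indicator_def)
    then obtain i where "i < length ds" "refl d \<circ> refl_word ds = refl_word (take i ds @ drop (Suc i) ds)"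
      using refl_word_exchange Cons.prems simple_root by (metis insert_subset list.simps(15))
    moreover have "set (take i ds @ drop (Suc i) ds) \<subseteq> D"
      using Cons.prems set_take_subset set_drop_subset by fastforce
    ultimately show ?thesis
      by (intro exI[of _ "take i ds @ drop (Suc i) ds"]) auto
  qed
qed

lemma weyl_length_eq_card_inversions:
  assumes "w \<in> weyl_group R"
  shows "weyl_length D w = card (inversions w)"
proof -
  let ?word = "\<lambda>n. \<exists>ds. length ds = n \<and> set ds \<subseteq> D \<and> w = refl_word ds"
  have length_def: "weyl_length D w = (LEAST n. ?word n)"
    unfolding weyl_length_def refl_word_def ..
  obtain ds where "set ds \<subseteq> D" "w = refl_word ds"
    using weyl_group_simple_word[OF assms] by blast
  then have "?word (length ds)"
    by blast
  then have "?word (weyl_length D w)"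
    unfolding length_def by (rule LeastI)
  then obtain ds0 where ds0: "length ds0 = weyl_length D w" "set ds0 \<subseteq> D" "w = refl_word ds0"
    by blast
  have "\<not> card (inversions w) < length ds0"
  proof
    assume "card (inversions w) < length ds0"
    then obtain ds' where "set ds' \<subseteq> D" "refl_word ds' = w" "length ds' < length ds0"
      using shorter_word_if_card_inversions_less[OF ds0(2)] unfolding ds0(3) by blast
    then show False
      using not_less_Least[of "length ds'" ?word] ds0(1) length_def by metis
  qed
  moreover have "card (inversions w) \<le> length ds0"
    using card_inversions_refl_word_le[OF ds0(2)] unfolding ds0(3) .
  ultimately show ?thesis
    using ds0(1) by simp
qed

end

locale simply_laced_positive_system = positive_root_system +
  assumes equal_lengths: "\<forall>a\<in>R. \<forall>b\<in>R. a \<bullet> a = b \<bullet> b"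
begin

lemma root_pairing_cases:
  assumes a: "a \<in> R" and g: "g \<in> R" and "g \<noteq> a" "g \<noteq> - a"
  shows "2 * (g \<bullet> a) / (a \<bullet> a) \<in> {-1, 0, 1}"
proof -
  have apos: "a \<bullet> a > 0"
    using root_nonzero[OF a] by simp
  obtain m where m: "2 * (g \<bullet> a) / (a \<bullet> a) = of_int m"
    using root_pairing_int[OF a g] Ints_cases by metis
  have gg: "g \<bullet> g = a \<bullet> a"
    using equal_lengths a g by blast
  then have "(g \<bullet> a)\<^sup>2 \<le> (a \<bullet> a)\<^sup>2"
    using Cauchy_Schwarz_ineq[of g a] by (simp add: power2_eq_square)
  then have "\<bar>g \<bullet> a\<bar> \<le> a \<bullet> a"
    using apos abs_le_square_iff[of "g \<bullet> a" "a \<bullet> a"] by simp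
  moreover have ga: "2 * (g \<bullet> a) = m * (a \<bullet> a)"
    using m apos by (simp add: field_simps)
  ultimately have "\<bar>of_int m\<bar> * (a \<bullet> a) \<le> 2 * (a \<bullet> a)"
    by (metis abs_mult abs_of_pos apos mult_le_cancel_left_pos zero_less_numeral)
  then have "\<bar>m\<bar> \<le> 2"
    using apos by simp
  \<comment> \<open>\<open>m = \<plusminus>2\<close> would force equality in Cauchy-Schwarz, i.e. \<open>g = \<plusminus>a\<close>\<close>
  moreover have "m \<noteq> 2"
  proof
    assume "m = 2"
    then have "(g - a) \<bullet> (g - a) = 0"
      using ga gg by (simp add: inner_diff_left inner_diff_right inner_commute)
    then show False
      using \<open>g \<noteq> a\<close> by simp
  qed
  moreover have "m \<noteq> -2"
  proof
    assume "m = -2"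
    then have "(g + a) \<bullet> (g + a) = 0"
      using ga gg by (simp add: inner_add_left inner_add_right inner_commute)
    then show False
      using \<open>g \<noteq> - a\<close> by (simp add: add_eq_0_iff2)
  qed
  ultimately have "m \<in> {-1, 0, 1}"
    by auto
  then show ?thesis
    using m by auto
qed

lemma refl_eq_uminus_if_sum:
  assumes a: "a \<in> P" and b: "b \<in> P" and d: "d \<in> P" and abd: "a = b + d"
  shows "refl a b = - d"
proof -
  define kb where "kb = 2 * (b \<bullet> a) / (a \<bullet> a)"
  define kd where "kd = 2 * (d \<bullet> a) / (a \<bullet> a)"
  have "kb + kd = 2 * ((b + d) \<bullet> a) / (a \<bullet> a)"
    by (simp add: kb_def kd_def inner_add_left add_divide_distrib)
  then have "kb + kd = 2"
    using abd pos_root_nonzero[OF a] by simp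
  moreover have "kb \<in> {-1, 0, 1}"
    unfolding kb_def using abd pos_root_nonzero[OF d] uminus_pos_root[OF a] b
    by (intro root_pairing_cases pos_root a b) auto
  moreover have "kd \<in> {-1, 0, 1}"
    unfolding kd_def using abd pos_root_nonzero[OF b] uminus_pos_root[OF a] d
    by (intro root_pairing_cases pos_root a d) auto
  ultimately have "kb = 1"
    by auto
  then have "refl a b = b - a"
    by (simp add: refl_def kb_def[symmetric])
  then show ?thesis
    using abd by simp
qed

lemma refl_eq_diff_if_not_pos:
  assumes a: "a \<in> P" and g: "g \<in> P" and "g \<noteq> a" and "refl a g \<notin> P"
  shows "refl a g = g - a"
proof -
  define k where "k = 2 * (g \<bullet> a) / (a \<bullet> a)"
  have rg: "refl a g = g - k *\<^sub>R a"
    by (simp add: refl_def k_def)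
  have "k \<in> {-1, 0, 1}"
    unfolding k_def using assms uminus_pos_root by (intro root_pairing_cases pos_root) auto
  moreover have "k \<noteq> 0"
    using rg g assms(4) by auto
  moreover have "k \<noteq> -1"
  proof
    assume "k = -1"
    then have "refl a g = g + a"
      using rg by simp
    then show False
      using pos_root_add[OF g a] refl_root[OF pos_root[OF a] pos_root[OF g]] assms(4) by simp
  qed
  ultimately show ?thesis
    using rg by auto
qed

lemma refl_negated_eq:
  assumes a: "a \<in> P"
  shows "{g\<in>P. refl a g \<notin> P} = insert a {g\<in>P. a - g \<in> P}"
proof (intro equalityI subsetI)
  fix g
  assume g: "g \<in> {g\<in>P. refl a g \<notin> P}"
  show "g \<in> insert a {g\<in>P. a - g \<in> P}"
  proof (cases "g = a")
    case False
    then have "refl a g = g - a"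
      using refl_eq_diff_if_not_pos a g by blast
    then show ?thesis
      using g root_cases[OF refl_root[OF pos_root[OF a] pos_root[of g]]] by auto
  qed simp
next
  fix g
  assume "g \<in> insert a {g\<in>P. a - g \<in> P}"
  then show "g \<in> {g\<in>P. refl a g \<notin> P}"
    using a refl_self[OF pos_root_nonzero[OF a]] refl_eq_uminus_if_sum[of a g "a - g"]
      uminus_pos_root[of a] uminus_pos_root[of "a - g"] by auto
qed

lemma length_refl_comp:
  assumes w: "w \<in> weyl_group R" and a: "a \<in> P"
  shows "int (weyl_length D (refl a \<circ> w)) = int (weyl_length D w) + 1 - 2 * neg_indicator w a
    - (\<Sum>g\<in>{g\<in>P. a - g \<in> P}. neg_indicator w g + neg_indicator w (a - g) - 1)"
proof -
  let ?S = "{g\<in>P. a - g \<in> P}"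
  have "a \<notin> ?S"
    using zero_not_root pos_roots_subset by auto
  have "(\<Sum>g\<in>?S. neg_indicator w (a - g)) = (\<Sum>g\<in>?S. neg_indicator w g)"
    by (rule sum.reindex_bij_betw) (rule bij_betwI[where g = "\<lambda>g. a - g"]; simp)
  then have sum_S: "(\<Sum>g\<in>?S. 1 - 2 * neg_indicator w g)
      = - (\<Sum>g\<in>?S. neg_indicator w g + neg_indicator w (a - g) - 1)"
    by (simp add: sum_subtractf sum.distrib sum_distrib_left[symmetric])
  have "refl a \<circ> w \<in> weyl_group R"
    using w pos_root[OF a] by (rule weyl_group.weyl_step[rotated])
  then have "int (weyl_length D (refl a \<circ> w))
      = int (weyl_length D w) + (\<Sum>g\<in>insert a ?S. 1 - 2 * neg_indicator w g)"
    using card_inversions_refl_comp[OF w a]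
    by (simp only: weyl_length_eq_card_inversions w refl_negated_eq[OF a])
  also have "(\<Sum>g\<in>insert a ?S. 1 - 2 * neg_indicator w g)
      = 1 - 2 * neg_indicator w a + (\<Sum>g\<in>?S. 1 - 2 * neg_indicator w g)"
    using finite_pos_roots \<open>a \<notin> ?S\<close> by (simp add: sum.insert)
  finally show ?thesis
    unfolding sum_S by linarith
qed

lemma length_refl_comp_inversion:
  assumes w: "w \<in> weyl_group R" and a: "a \<in> inversions w"
  shows "int (weyl_length D (refl a \<circ> w)) = int (weyl_length D w) - 1 \<longleftrightarrow>
    \<not> (\<exists>b\<in>inversions w. \<exists>d\<in>inversions w. a = b + d)"
proof -
  let ?S = "{g\<in>P. a - g \<in> P}"
  let ?X = "neg_indicator w"
  have aP: "a \<in> P" and "?X a = 1"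
    using a by (simp_all add: inversions_def neg_indicator_def)
  have X_cases: "?X x = 0 \<or> ?X x = 1" for x
    by (simp add: neg_indicator_def)
  have pair_meets_neg: "?X g = 1 \<or> ?X (a - g) = 1" if g: "g \<in> ?S" for g
  proof (rule ccontr)
    assume "\<not> ?thesis"
    then have "g \<notin> w ` uminus ` P" "a - g \<notin> w ` uminus ` P"
      by (simp_all add: neg_indicator_def)
    then have "g \<in> w ` P" "a - g \<in> w ` P"
      using g weyl_group_neg_image_iff[OF w] pos_root by auto
    then have "g + (a - g) \<in> w ` P"
      using pos_root[OF aP] by (intro weyl_group_pos_image_add[OF w]) simp_all
    then have "a \<in> w ` P"
      by simp
    then show False
      using a weyl_group_neg_image_iff[OF w pos_root[OF aP]] by (simp add: inversions_def)
  qed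
  have X_eq_1_iff: "?X x = 1 \<longleftrightarrow> x \<in> inversions w" if "x \<in> P" for x
    using that by (simp add: inversions_def neg_indicator_def)
  have terms_nonneg: "?X g + ?X (a - g) - 1 \<ge> 0" if "g \<in> ?S" for g
    using pair_meets_neg[OF that] X_cases[of g] X_cases[of "a - g"] by auto
  have term_eq_0_iff: "?X g + ?X (a - g) - 1 = 0 \<longleftrightarrow> \<not> (g \<in> inversions w \<and> a - g \<in> inversions w)"
    if "g \<in> ?S" for g
    using that pair_meets_neg[OF that] X_cases[of g] X_cases[of "a - g"]
      X_eq_1_iff[of g] X_eq_1_iff[of "a - g"] by auto
  have "int (weyl_length D (refl a \<circ> w)) = int (weyl_length D w) - 1
      \<longleftrightarrow> (\<Sum>g\<in>?S. ?X g + ?X (a - g) - 1) = 0"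
    using length_refl_comp[OF w aP] \<open>?X a = 1\<close> by linarith
  also have "\<dots> \<longleftrightarrow> (\<forall>g\<in>?S. ?X g + ?X (a - g) - 1 = 0)"
    by (rule sum_nonneg_eq_0_iff) (use finite_pos_roots terms_nonneg in auto)
  also have "\<dots> \<longleftrightarrow> \<not> (\<exists>g\<in>?S. g \<in> inversions w \<and> a - g \<in> inversions w)"
    using term_eq_0_iff by blast
  also have "\<dots> \<longleftrightarrow> \<not> (\<exists>b\<in>inversions w. \<exists>d\<in>inversions w. a = b + d)"
    using ex_decomposition_iff_diff[of "inversions w" P a] by (simp add: inversions_def)
  finally show ?thesis .
qed

lemma refl_comp_neg_image_iff_of_sum:
  assumes w: "w \<in> weyl_group R" and "a \<in> P" "b \<in> P" "d \<in> P" "a = b + d"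
  shows "b \<in> (refl a \<circ> w) ` uminus ` P \<longleftrightarrow> d \<in> w ` P"
  unfolding refl_comp_image_iff[OF pos_root_nonzero[OF assms(2)]] refl_eq_uminus_if_sum[OF assms(2-5)]
  by (rule weyl_group_uminus_neg_image_iff[OF w])

lemma refl_comp_inversion_decomposition_iff:
  assumes w: "w \<in> weyl_group R" and a: "a \<in> P"
  shows "(\<exists>b\<in>inversions (refl a \<circ> w). \<exists>d\<in>inversions (refl a \<circ> w). a = b + d)
    \<longleftrightarrow> (\<exists>b\<in>P \<inter> w ` P. \<exists>d\<in>P \<inter> w ` P. a = b + d)"
proof -
  have inversions_iff: "x \<in> inversions (refl a \<circ> w) \<longleftrightarrow> x \<in> P \<and> x \<in> (refl a \<circ> w) ` uminus ` P" for x
    by (simp only: inversions_def Int_iff)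
  have swap: "b \<in> inversions (refl a \<circ> w) \<and> d \<in> inversions (refl a \<circ> w)
      \<longleftrightarrow> d \<in> P \<inter> w ` P \<and> b \<in> P \<inter> w ` P"
    if "b \<in> P" "d \<in> P" "a = b + d" for b d
  proof -
    have "b \<in> inversions (refl a \<circ> w) \<longleftrightarrow> d \<in> w ` P"
      using refl_comp_neg_image_iff_of_sum[OF w a that] inversions_iff[of b] that(1) by simp
    moreover have "d \<in> inversions (refl a \<circ> w) \<longleftrightarrow> b \<in> w ` P"
      using refl_comp_neg_image_iff_of_sum[OF w a that(2,1)] inversions_iff[of d] that
      by (simp add: add.commute)
    ultimately show ?thesis
      using that by blast
  qed
  show ?thesis
  proof
    assume "\<exists>b\<in>inversions (refl a \<circ> w). \<exists>d\<in>inversions (refl a \<circ> w). a = b + d"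
    then obtain b d where "b \<in> inversions (refl a \<circ> w)" "d \<in> inversions (refl a \<circ> w)" "a = b + d"
      by blast
    then show "\<exists>b\<in>P \<inter> w ` P. \<exists>d\<in>P \<inter> w ` P. a = b + d"
      using swap[of b d] inversions_iff add.commute[of b d] by blast
  next
    assume "\<exists>b\<in>P \<inter> w ` P. \<exists>d\<in>P \<inter> w ` P. a = b + d"
    then obtain b d where "b \<in> P \<inter> w ` P" "d \<in> P \<inter> w ` P" "a = b + d"
      by blast
    then show "\<exists>b\<in>inversions (refl a \<circ> w). \<exists>d\<in>inversions (refl a \<circ> w). a = b + d"
      using swap[of d b] add.commute[of b d] by blast
  qed
qed

lemma length_refl_comp_non_inversion:
  assumes w: "w \<in> weyl_group R" and a: "a \<in> P \<inter> w ` P"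
  shows "int (weyl_length D (refl a \<circ> w)) = int (weyl_length D w) + 1 \<longleftrightarrow>
    \<not> (\<exists>b\<in>P \<inter> w ` P. \<exists>d\<in>P \<inter> w ` P. a = b + d)"
proof -
  define u where "u = refl a \<circ> w"
  have aP: "a \<in> P"
    using a by blast
  have u: "u \<in> weyl_group R"
    unfolding u_def using w pos_root[OF aP] by (rule weyl_group.weyl_step[rotated])
  have "refl a \<circ> u = w"
    using pos_root_nonzero[OF aP] by (simp add: u_def fun_eq_iff)
  have "a \<in> (refl a \<circ> w) ` uminus ` P"
    unfolding refl_comp_image_iff[OF pos_root_nonzero[OF aP]]
      refl_self[OF pos_root_nonzero[OF aP]] weyl_group_uminus_neg_image_iff[OF w]
    using a by blast
  then have "a \<in> inversions u"
    using aP by (simp add: inversions_def u_def)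
  then have "int (weyl_length D w) = int (weyl_length D u) - 1 \<longleftrightarrow>
      \<not> (\<exists>b\<in>P \<inter> w ` P. \<exists>d\<in>P \<inter> w ` P. a = b + d)"
    using length_refl_comp_inversion[OF u \<open>a \<in> inversions u\<close>]
      refl_comp_inversion_decomposition_iff[OF w aP, folded u_def]
    unfolding \<open>refl a \<circ> u = w\<close> by simp
  moreover have "int (weyl_length D u) = int (weyl_length D w) + 1
      \<longleftrightarrow> int (weyl_length D w) = int (weyl_length D u) - 1"
    by linarith
  ultimately show ?thesis
    unfolding u_def[symmetric] by blast
qed

end

theorem mainTheorem14:
  fixes R P D :: "'a::euclidean_space set" and w :: "'a \<Rightarrow> 'a" and \<alpha> :: 'a
  assumes "simply_laced_root_system R"
    and "positive_system R P"
    and "simple_system P D"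
    and "w \<in> weyl_group R"
  shows "(\<alpha> \<in> P \<inter> w ` (uminus ` P) \<longrightarrow>
           (int (weyl_length D (refl \<alpha> \<circ> w)) = int (weyl_length D w) - 1 \<longleftrightarrow>
            \<not> (\<exists>\<beta>\<in>P \<inter> w ` (uminus ` P). \<exists>\<delta>\<in>P \<inter> w ` (uminus ` P). \<alpha> = \<beta> + \<delta>)))
       \<and> (\<alpha> \<in> P \<inter> w ` P \<longrightarrow>
           (int (weyl_length D (refl \<alpha> \<circ> w)) = int (weyl_length D w) + 1 \<longleftrightarrow>
            \<not> (\<exists>\<beta>\<in>P \<inter> w ` P. \<exists>\<delta>\<in>P \<inter> w ` P. \<alpha> = \<beta> + \<delta>)))"
proof -
  obtain v where "\<forall>a\<in>R. v \<bullet> a \<noteq> 0" "P = {a\<in>R. v \<bullet> a > 0}"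
    using assms(2) unfolding positive_system_def by blast
  moreover have "root_system R" "reduced R" "\<forall>a\<in>R. \<forall>b\<in>R. a \<bullet> a = b \<bullet> b"
    using assms(1) unfolding simply_laced_root_system_def by blast+
  ultimately interpret simply_laced_positive_system R P D v
    using assms(3) by unfold_locales
  show ?thesis
    using length_refl_comp_inversion[OF assms(4)] length_refl_comp_non_inversion[OF assms(4)]
    unfolding inversions_def by blast
qed

end
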